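(* Let $\mathsf{C}\subset V$ be a polyhedral proper cone, $\phi$ in the interior of $\mathsf{C}^*$, $K_\phi=\mathsf{C}\cap\phi^{-1}(1)$, and $k\ge1$. For each facet $F$ of $K_\phi$ choose $x_F$ in the relative interior of $F$, and set $\omega_k=\sum_{F\in\mathcal F(K_\phi)}x_F^{\otimes k}\otimes\psi_F\in V^{\otimes k}\otimes V^*$. The following are equivalent: (i) $\omega_k$ lies in the interior of $\mathsf{C}^{\otimes_{\max}k}\otimes_{\max}\mathsf{C}^*$; (ii) for every vertex $x\in\mathcal V(K_\phi)$, $\mathrm{card}(\mathrm{Av}(x))>k$.
   Context: Proper cone: closed convex cone in a finite-dimensional real vector space, containing no line, not contained in a hyperplane; $\mathsf{C}^*$ is its dual cone; $\mathsf{C}_1\otimes_{\max}\mathsf{C}_2=\{z:(f\otimes g)(z)\ge0\ \forall f\in\mathsf{C}_1^*,g\in\mathsf{C}_2^*\}$, iterated. $\mathcal V(P)$ and $\mathcal F(P)$ are the vertex set and facet set of a polytope $P$. For each facet $F$, $\psi_F\in\mathsf{C}^*$ is a linear form with $F=K_\phi\cap\ker\psi_F$. The avoiding set of a vertex $x$ is $\mathrm{Av}(x)=\{F\in\mathcal F(K_\phi):x\notin F\}$. *)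

theory Defs
  imports "HOL-Analysis.Analysis"
begin

text \<open>V is modelled as real^'n; V^* is identified with real^'n via the inner product.\<close>

definition dual_cone :: "(real^'n) set \<Rightarrow> (real^'n) set" where
  "dual_cone C = {f. \<forall>x\<in>C. 0 \<le> f \<bullet> x}"

definition proper_cone :: "(real^'n) set \<Rightarrow> bool" where
  "proper_cone C \<longleftrightarrow> closed C \<and> convex C \<and> cone C \<and> C \<noteq> {} \<and>
     \<not> (\<exists>x v. v \<noteq> 0 \<and> (\<forall>t::real. x + t *\<^sub>R v \<in> C)) \<and>
     \<not> (\<exists>a b. a \<noteq> 0 \<and> C \<subseteq> {x. a \<bullet> x = b})"

definition polyhedral_cone :: "(real^'n) set \<Rightarrow> bool" where
  "polyhedral_cone C \<longleftrightarrow> polyhedron C \<and> cone C \<and> C \<noteq> {}"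

definition Kphi :: "(real^'n) set \<Rightarrow> real^'n \<Rightarrow> (real^'n) set" where
  "Kphi C \<phi> = C \<inter> {x. \<phi> \<bullet> x = 1}"

text \<open>Elements of V^{\<otimes>k} \<otimes> V^* are coordinate arrays indexed by
  ('k \<Rightarrow> 'n) \<times> 'n, where k = CARD('k).  The max tensor product
  C \<otimes>max ... \<otimes>max C (k times) \<otimes>max C^* consists of the tensors on which every
  product functional f_1 \<otimes> ... \<otimes> f_k \<otimes> g with f_i \<in> C^*, g \<in> (C^*)^* is nonnegative.\<close>

definition prod_functional ::
  "('k::finite \<Rightarrow> real^'n) \<Rightarrow> real^'n \<Rightarrow> real^(('k \<Rightarrow> 'n) \<times> 'n) \<Rightarrow> real" where
  "prod_functional fs g z = (\<Sum>p\<in>UNIV. (\<Prod>i\<in>UNIV. fs i $ fst p i) * g $ snd p * z $ p)"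

definition max_tensor_cone :: "(real^'n) set \<Rightarrow> (real^(('k::finite \<Rightarrow> 'n) \<times> 'n)) set" where
  "max_tensor_cone C = {z. \<forall>fs g. (\<forall>i. fs i \<in> dual_cone C) \<longrightarrow> g \<in> dual_cone (dual_cone C)
       \<longrightarrow> 0 \<le> prod_functional fs g z}"

definition tensor_power_dual :: "real^'n \<Rightarrow> real^'n \<Rightarrow> real^(('k::finite \<Rightarrow> 'n) \<times> 'n)" where
  "tensor_power_dual x \<psi> = (\<chi> p. (\<Prod>i\<in>UNIV. x $ fst p i) * \<psi> $ snd p)"

definition omega ::
  "(real^'n) set \<Rightarrow> ((real^'n) set \<Rightarrow> real^'n) \<Rightarrow> ((real^'n) set \<Rightarrow> real^'n)
     \<Rightarrow> real^(('k::finite \<Rightarrow> 'n) \<times> 'n)" where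
  "omega K xF \<psi> = (\<Sum>F\<in>{F. F facet_of K}. tensor_power_dual (xF F) (\<psi> F))"

definition Av :: "(real^'n) set \<Rightarrow> real^'n \<Rightarrow> (real^'n) set set" where
  "Av K x = {F. F facet_of K \<and> x \<notin> F}"

end

theory Submission
  imports Defs
begin

text \<open>Pairing \<open>\<omega>\<^sub>k\<close> with a product functional \<open>f\<^sub>1 \<otimes> \<dots> \<otimes> f\<^sub>k \<otimes> g\<close> gives
  \<open>\<Sum>\<^sub>F (\<Prod>\<^sub>i f\<^sub>i(x\<^sub>F)) \<psi>\<^sub>F(g)\<close>, and a tensor is interior to a max tensor cone iff every
  product of nonzero functionals is strictly positive on it (the normalized functionals form a
  compact set).  A nonzero \<open>f \<in> C\<^sup>*\<close> vanishes at \<open>x\<^sub>F\<close> for at most one facet \<open>F\<close>, because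
  \<open>x\<^sub>F\<close> lies in the relative interior of \<open>F\<close> and the zero set of \<open>f\<close> on \<open>K\<^sub>\<phi>\<close> is a proper
  face.  So if every vertex avoids more than \<open>k\<close> facets, take a vertex \<open>x\<close> lying on every
  facet through \<open>g/\<phi>(g)\<close>: the facets avoiding \<open>x\<close> also avoid \<open>g\<close>, and one of them survives
  all \<open>k\<close> functionals and contributes a positive term.  Conversely, if a vertex
  \<open>x\<close> avoids at most \<open>k\<close> facets, the functionals \<open>\<psi>\<^sub>F\<close> of those facets together with
  \<open>g = x\<close> annihilate every term.\<close>

definition prod_tensor :: "('k::finite \<Rightarrow> real^'n) \<Rightarrow> real^'n \<Rightarrow> real^(('k \<Rightarrow> 'n) \<times> 'n)" where
  "prod_tensor us v = (\<chi> p. (\<Prod>i\<in>UNIV. us i $ fst p i) * v $ snd p)"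

lemma tensor_power_dual_eq_prod_tensor: "tensor_power_dual x \<psi> = prod_tensor (\<lambda>_. x) \<psi>"
  unfolding tensor_power_dual_def prod_tensor_def ..

lemma sum_funs_prod_eq_prod_sum:
  fixes a :: "'k::finite \<Rightarrow> 'n::finite \<Rightarrow> real"
  shows "(\<Sum>h\<in>UNIV. \<Prod>i\<in>UNIV. a i (h i)) = (\<Prod>i\<in>UNIV. \<Sum>j\<in>UNIV. a i j)"
  using prod_sum_PiE[of "UNIV::'k set" "\<lambda>_. UNIV" a] by (simp add: PiE_UNIV_domain)

lemma prod_functional_prod_tensor:
  "prod_functional fs g (prod_tensor us v) = (\<Prod>i\<in>UNIV. fs i \<bullet> us i) * (g \<bullet> v)"
proof -
  have "prod_functional fs g (prod_tensor us v)
     = (\<Sum>h\<in>UNIV. \<Sum>j\<in>UNIV. (\<Prod>i\<in>UNIV. fs i $ h i * us i $ h i) * (g $ j * v $ j))"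
    unfolding prod_functional_def prod_tensor_def UNIV_Times_UNIV[symmetric] sum.cartesian_product
    by (simp add: prod.distrib algebra_simps split_beta)
  also have "\<dots> = (\<Sum>h\<in>UNIV. \<Prod>i\<in>UNIV. fs i $ h i * us i $ h i) * (\<Sum>j\<in>UNIV. g $ j * v $ j)"
    by (rule sum_product[symmetric])
  also have "\<dots> = (\<Prod>i\<in>UNIV. fs i \<bullet> us i) * (g \<bullet> v)"
    by (simp add: sum_funs_prod_eq_prod_sum[of "\<lambda>i j. fs i $ j * us i $ j"] inner_vec_def)
  finally show ?thesis .
qed

lemma linear_prod_functional: "linear (prod_functional fs g)"
  by (rule linearI) (simp_all add: prod_functional_def algebra_simps sum.distrib sum_distrib_left)

lemma prod_functional_scaleR_args:
  "prod_functional (\<lambda>i. c i *\<^sub>R fs i) (d *\<^sub>R g) z = (\<Prod>i\<in>UNIV. c i) * d * prod_functional fs g z"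
  unfolding prod_functional_def by (simp add: prod.distrib sum_distrib_left mult_ac)

lemma prod_functional_sgn:
  "prod_functional fs g z
     = (\<Prod>i\<in>UNIV. norm (fs i)) * norm g * prod_functional (\<lambda>i. sgn (fs i)) (sgn g) z"
proof -
  have norm_scaleR_sgn: "norm x *\<^sub>R sgn x = x" for x :: "real^'n"
    by (cases "x = 0") (simp_all add: sgn_div_norm)
  show ?thesis
    using prod_functional_scaleR_args[of "\<lambda>i. norm (fs i)" "\<lambda>i. sgn (fs i)" "norm g" "sgn g" z]
    by (simp only: norm_scaleR_sgn)
qed

lemma prod_functional_eq_0:
  assumes "fs i = 0 \<or> g = 0"
  shows "prod_functional fs g z = 0"
  using assms unfolding prod_functional_def
  by (auto intro!: sum.neutral simp: prod_zero_iff) (metis zero_index)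

lemma abs_prod_functional_le:
  fixes fs :: "'k::finite \<Rightarrow> real^'n" and z :: "real^(('k \<Rightarrow> 'n) \<times> 'n)"
  assumes "\<And>i. norm (fs i) \<le> 1" "norm g \<le> 1"
  shows "\<bar>prod_functional fs g z\<bar> \<le> real CARD(('k \<Rightarrow> 'n) \<times> 'n) * norm z"
proof -
  have comp: "\<bar>x $ j\<bar> \<le> 1" if "norm x \<le> 1" for x :: "real^'n" and j
    using that component_le_norm_cart order_trans by blast
  have term_le: "\<bar>(\<Prod>i\<in>UNIV. fs i $ fst p i) * g $ snd p * z $ p\<bar> \<le> 1 * 1 * norm z" for p
    unfolding abs_mult abs_prod
    by (intro mult_mono prod_le_1) (simp_all add: comp assms component_le_norm_cart prod_nonneg)
  have "\<bar>prod_functional fs g z\<bar> \<le> (\<Sum>p\<in>UNIV. \<bar>(\<Prod>i\<in>UNIV. fs i $ fst p i) * g $ snd p * z $ p\<bar>)"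
    unfolding prod_functional_def by (rule sum_abs)
  also have "\<dots> \<le> (\<Sum>p\<in>(UNIV::(('k \<Rightarrow> 'n) \<times> 'n) set). norm z)"
    using term_le by (intro sum_mono) simp
  finally show ?thesis by simp
qed

definition tensor_cone :: "(real^'n) set \<Rightarrow> (real^'n) set \<Rightarrow> (real^(('k::finite \<Rightarrow> 'n) \<times> 'n)) set" where
  "tensor_cone A B = {z. \<forall>fs g. (\<forall>i. fs i \<in> A) \<longrightarrow> g \<in> B \<longrightarrow> 0 \<le> prod_functional fs g z}"

lemma compact_vec_components:
  fixes S :: "'a::euclidean_space set"
  assumes "compact S"
  shows "compact {V :: 'a^'k. \<forall>i. V $ i \<in> S}"
proof -
  obtain r where r: "\<And>x. x \<in> S \<Longrightarrow> norm x \<le> r"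
    using compact_imp_bounded[OF assms] unfolding bounded_iff by blast
  have "{V :: 'a^'k. \<forall>i. V $ i \<in> S} = (\<Inter>i. (\<lambda>V. V $ i) -` S)"
    by auto
  also have "closed \<dots>"
    by (intro closed_INT ballI closed_vimage_vec_nth compact_imp_closed[OF assms])
  finally have "closed {V :: 'a^'k. \<forall>i. V $ i \<in> S}" .
  moreover have "norm V \<le> real CARD('k) * r" if "\<forall>i. V $ i \<in> S" for V :: "'a^'k"
  proof -
    have "norm V \<le> (\<Sum>i\<in>UNIV. norm (V $ i))"
      unfolding norm_vec_def by (rule L2_set_le_sum) simp
    also have "\<dots> \<le> (\<Sum>i\<in>(UNIV::'k set). r)" using that r by (intro sum_mono) auto
    finally show ?thesis by simp
  qed
  then have "bounded {V :: 'a^'k. \<forall>i. V $ i \<in> S}"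
    unfolding bounded_iff by blast
  ultimately show ?thesis by (simp add: compact_eq_bounded_closed)
qed

lemma prod_functional_uniformly_pos:
  fixes z :: "real^(('k::finite \<Rightarrow> 'n::finite) \<times> 'n)"
  assumes "closed A" "closed B"
    and pos: "\<forall>fs g. (\<forall>i. fs i \<in> A - {0}) \<longrightarrow> g \<in> B - {0} \<longrightarrow> 0 < prod_functional fs g z"
  shows "\<exists>\<delta>>0. \<forall>fs g. (\<forall>i. fs i \<in> A \<inter> sphere 0 1) \<longrightarrow> g \<in> B \<inter> sphere 0 1
                \<longrightarrow> \<delta> \<le> prod_functional fs g z"
proof -
  define S where "S = {V :: (real^'n)^'k. \<forall>i. V $ i \<in> A \<inter> sphere 0 1} \<times> (B \<inter> sphere 0 1)"
  define P where "P = (\<lambda>Vg. prod_functional (\<lambda>i. fst Vg $ i) (snd Vg) z)"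
  have S: "(\<chi> i. fs i, g) \<in> S" if "\<forall>i. fs i \<in> A \<inter> sphere 0 1" "g \<in> B \<inter> sphere 0 1" for fs g
    using that unfolding S_def by simp
  show ?thesis
  proof (cases "S = {}")
    case True
    show ?thesis
    proof (intro exI[of _ "1::real"] conjI allI impI)
      fix fs :: "'k \<Rightarrow> real^'n" and g
      assume "\<forall>i. fs i \<in> A \<inter> sphere 0 1" "g \<in> B \<inter> sphere 0 1"
      with S True show "1 \<le> prod_functional fs g z" by blast
    qed simp
  next
    case False
    have "compact S"
      unfolding S_def using assms(1,2)
      by (intro compact_Times compact_vec_components closed_Int_compact) auto
    moreover have "continuous_on S P"
      unfolding P_def prod_functional_def by (intro continuous_intros)
    ultimately obtain m where m: "m \<in> S" "\<And>y. y \<in> S \<Longrightarrow> P m \<le> P y"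
      using continuous_attains_inf[OF _ False] by blast
    have unit_nonzero: "X \<inter> sphere 0 1 \<subseteq> X - {0}" for X :: "(real^'n) set"
      by auto
    have "\<forall>i. fst m $ i \<in> A \<inter> sphere 0 1" "snd m \<in> B \<inter> sphere 0 1"
      using m(1) unfolding S_def by (simp_all add: mem_Times_iff)
    then have "\<forall>i. fst m $ i \<in> A - {0}" "snd m \<in> B - {0}"
      using unit_nonzero by blast+
    then have "0 < P m" unfolding P_def using pos by blast
    moreover have "P m \<le> prod_functional fs g z"
      if "\<forall>i. fs i \<in> A \<inter> sphere 0 1" "g \<in> B \<inter> sphere 0 1" for fs g
      using m(2)[OF S[OF that]] unfolding P_def by (simp add: vec_lambda_inverse)
    ultimately show ?thesis by blast
  qed
qed

lemma pos_of_mem_interior_tensor_cone: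
  assumes "z \<in> interior (tensor_cone A B)" "\<And>i. fs i \<in> A - {0}" "g \<in> B - {0}"
  shows "0 < prod_functional fs g z"
proof -
  obtain e where e: "e > 0" "ball z e \<subseteq> tensor_cone A B"
    using assms(1) mem_interior by blast
  define t where "t = prod_tensor fs g"
  have t: "0 < prod_functional fs g t"
    unfolding t_def prod_functional_prod_tensor using assms(2,3)
    by (intro mult_pos_pos prod_pos) auto
  have nt: "0 < norm t"
    using t linear_0[OF linear_prod_functional, of fs g] by (cases "t = 0") auto
  define c where "c = e / (2 * norm t)"
  have "z - c *\<^sub>R t \<in> ball z e" using nt e unfolding c_def dist_norm by simp
  then have "0 \<le> prod_functional fs g (z - c *\<^sub>R t)"
    using e(2) assms(2,3) unfolding tensor_cone_def by blast
  also have "\<dots> = prod_functional fs g z - c * prod_functional fs g t"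
    by (simp add: linear_diff[OF linear_prod_functional] linear_scale[OF linear_prod_functional])
  finally have "c * prod_functional fs g t \<le> prod_functional fs g z" by simp
  moreover have "0 < c * prod_functional fs g t" using t e nt unfolding c_def by simp
  ultimately show ?thesis by linarith
qed

lemma mem_interior_tensor_cone_of_pos:
  fixes z :: "real^(('k::finite \<Rightarrow> 'n::finite) \<times> 'n)"
  assumes A: "closed A" "cone A" and B: "closed B" "cone B"
    and pos: "\<forall>fs g. (\<forall>i. fs i \<in> A - {0}) \<longrightarrow> g \<in> B - {0} \<longrightarrow> 0 < prod_functional fs g z"
  shows "z \<in> interior (tensor_cone A B)"
proof -
  from prod_functional_uniformly_pos[OF A(1) B(1) pos]
  obtain \<delta> where \<delta>: "\<delta> > 0"
    and \<delta>_le: "\<forall>fs g. (\<forall>i. fs i \<in> A \<inter> sphere 0 1) \<longrightarrow> g \<in> B \<inter> sphere 0 1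
                   \<longrightarrow> \<delta> \<le> prod_functional fs g z"
    by blast
  define N where "N = real CARD(('k \<Rightarrow> 'n) \<times> 'n)"
  have N: "N > 0" unfolding N_def by simp
  have sgn_unit: "sgn x \<in> S \<inter> sphere 0 1" if "cone S" "x \<in> S" "x \<noteq> 0" for S and x :: "real^'n"
    using that by (simp add: sgn_div_norm cone_def norm_sgn)
  have "w \<in> tensor_cone A B" if w: "w \<in> ball z (\<delta> / N)" for w
    unfolding tensor_cone_def
  proof (intro CollectI allI impI)
    fix fs :: "'k \<Rightarrow> real^'n" and g
    assume fs: "\<forall>i. fs i \<in> A" and g: "g \<in> B"
    show "0 \<le> prod_functional fs g w"
    proof (cases "\<exists>i. fs i = 0 \<or> g = 0")
      case True
      then obtain i where "fs i = 0 \<or> g = 0" by blast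
      then show ?thesis by (simp add: prod_functional_eq_0[of fs i g w])
    next
      case False
      let ?p = "prod_functional (\<lambda>i. sgn (fs i)) (sgn g)"
      have "\<forall>i. sgn (fs i) \<in> A \<inter> sphere 0 1" "sgn g \<in> B \<inter> sphere 0 1"
        using sgn_unit A(2) B(2) fs g False by auto
      then have "\<delta> \<le> ?p z" using \<delta>_le by simp
      moreover have "\<bar>?p (w - z)\<bar> \<le> N * norm (w - z)"
        unfolding N_def by (rule abs_prod_functional_le) (simp_all add: norm_sgn)
      moreover have "N * norm (w - z) < \<delta>"
        using w N by (simp add: dist_norm norm_minus_commute pos_less_divide_eq mult.commute)
      moreover have "?p w = ?p z + ?p (w - z)"
        by (simp add: linear_diff[OF linear_prod_functional])
      ultimately have "0 < ?p w" by linarith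
      then show ?thesis
        by (subst prod_functional_sgn) (simp add: prod_nonneg)
    qed
  qed
  then have "ball z (\<delta> / N) \<subseteq> tensor_cone A B" by (rule subsetI)
  moreover have "\<delta> / N > 0" using \<delta> N by simp
  ultimately show ?thesis unfolding mem_interior by blast
qed

lemma interior_tensor_cone_iff:
  assumes "closed A" "cone A" "closed B" "cone B"
  shows "z \<in> interior (tensor_cone A B) \<longleftrightarrow>
    (\<forall>fs g. (\<forall>i. fs i \<in> A - {0}) \<longrightarrow> g \<in> B - {0} \<longrightarrow> 0 < prod_functional fs g z)"
proof
  assume "z \<in> interior (tensor_cone A B)"
  then show "\<forall>fs g. (\<forall>i. fs i \<in> A - {0}) \<longrightarrow> g \<in> B - {0} \<longrightarrow> 0 < prod_functional fs g z"
    using pos_of_mem_interior_tensor_cone by blast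
qed (rule mem_interior_tensor_cone_of_pos[OF assms])

lemma closed_dual_cone: "closed (dual_cone C)"
proof -
  have "dual_cone C = (\<Inter>x\<in>C. {f. 0 \<le> f \<bullet> x})" unfolding dual_cone_def by auto
  moreover have "closed {f. 0 \<le> f \<bullet> x}" for x :: "real^'n"
    using closed_halfspace_ge[of 0 x] by (simp add: inner_commute)
  ultimately show ?thesis by auto
qed

lemma cone_dual_cone: "cone (dual_cone C)"
  unfolding cone_def dual_cone_def by simp

lemma dual_dual_cone:
  fixes C :: "(real^'n) set"
  assumes "closed C" "convex C" "cone C" "C \<noteq> {}"
  shows "dual_cone (dual_cone C) = C"
proof
  show "C \<subseteq> dual_cone (dual_cone C)" unfolding dual_cone_def by (auto simp: inner_commute)
next
  show "dual_cone (dual_cone C) \<subseteq> C"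
  proof
    fix g assume g: "g \<in> dual_cone (dual_cone C)"
    show "g \<in> C"
    proof (rule ccontr)
      assume "g \<notin> C"
      then obtain a b where ab: "a \<bullet> g < b" "\<forall>x\<in>C. b < a \<bullet> x"
        using separating_hyperplane_closed_point[OF assms(2,1)] by blast
      have "0 \<in> C" using assms(3,4) by (simp add: cone_contains_0)
      then have b: "b < 0" using ab by fastforce
      have "0 \<le> a \<bullet> x" if x: "x \<in> C" for x
      proof (rule ccontr)
        assume neg: "\<not> 0 \<le> a \<bullet> x"
        define t where "t = b / (a \<bullet> x)"
        have "t > 0" unfolding t_def using neg b by (simp add: divide_neg_neg)
        then have "t *\<^sub>R x \<in> C" using assms(3) x unfolding cone_def by simp
        then have "b < a \<bullet> (t *\<^sub>R x)" using ab by blast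
        also have "a \<bullet> (t *\<^sub>R x) = b" unfolding t_def using neg by simp
        finally show False by simp
      qed
      then have "a \<in> dual_cone C" unfolding dual_cone_def by blast
      then have "0 \<le> g \<bullet> a" using g unfolding dual_cone_def by blast
      then show False using ab b by (simp add: inner_commute)
    qed
  qed
qed

lemma mem_interior_dual_cone_bound:
  assumes "\<phi> \<in> interior (dual_cone C)"
  obtains e where "e > 0" "\<And>c. c \<in> C \<Longrightarrow> e * norm c \<le> \<phi> \<bullet> c"
proof -
  obtain e where e: "e > 0" "ball \<phi> e \<subseteq> dual_cone C" using assms mem_interior by blast
  have "e / 2 * norm c \<le> \<phi> \<bullet> c" if c: "c \<in> C" for c
  proof (cases "c = 0")
    case False
    define v where "v = \<phi> - (e / 2 / norm c) *\<^sub>R c"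
    have "dist \<phi> v = e / 2" unfolding v_def dist_norm using False e by simp
    then have "v \<in> dual_cone C" using e by auto
    then have "0 \<le> v \<bullet> c" using c unfolding dual_cone_def by blast
    also have "v \<bullet> c = \<phi> \<bullet> c - e / 2 * norm c"
      using False by (simp add: v_def inner_diff_left dot_square_norm power2_eq_square)
    finally show ?thesis by simp
  qed simp
  then show ?thesis using e by (intro that[of "e/2"]) auto
qed

lemma facet_eq_supporting_face:
  fixes K :: "(real^'n) set"
  assumes K: "convex K" and F: "F facet_of K" and x: "x \<in> rel_interior F"
    and nonneg: "\<forall>y\<in>K. 0 \<le> f \<bullet> y" and nonzero: "\<exists>y\<in>K. f \<bullet> y \<noteq> 0" and "f \<bullet> x = 0"
  shows "F = K \<inter> {y. f \<bullet> y = 0}"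
proof -
  define G where "G = K \<inter> {y. f \<bullet> y = 0}"
  have G: "G face_of K" unfolding G_def
    using nonneg by (intro face_of_Int_supporting_hyperplane_ge K) auto
  have "G \<noteq> K" using nonzero unfolding G_def by auto
  then have adG: "aff_dim G < aff_dim K" using face_of_aff_dim_lt[OF K G] by blast
  have FK: "F face_of K" "aff_dim F = aff_dim K - 1" using F unfolding facet_of_def by auto
  have "x \<in> G \<inter> rel_interior F"
    using x rel_interior_subset face_of_imp_subset[OF FK(1)] \<open>f \<bullet> x = 0\<close> unfolding G_def by auto
  then have FG: "F \<subseteq> G" using subset_of_face_of[OF G face_of_imp_subset[OF FK(1)]] by blast
  then have "F face_of G" using face_of_subset[OF FK(1) FG face_of_imp_subset[OF G]] by blast
  have "F = G"
  proof (rule ccontr)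
    assume "F \<noteq> G"
    then have "aff_dim F < aff_dim G"
      using face_of_aff_dim_lt[OF face_of_imp_convex[OF G] \<open>F face_of G\<close>] by blast
    then show False using adG FK(2) by linarith
  qed
  then show ?thesis unfolding G_def .
qed

lemma extreme_point_in_facets_through:
  fixes K :: "(real^'n) set"
  assumes "convex K" "compact K" "y \<in> K"
  obtains x where "x extreme_point_of K" "\<And>F. F facet_of K \<Longrightarrow> y \<in> F \<Longrightarrow> x \<in> F"
proof -
  define G where "G = \<Inter>(insert K {F. F facet_of K \<and> y \<in> F})"
  have G: "G face_of K" unfolding G_def
    by (rule face_of_Inter) (auto simp: facet_of_def face_of_refl assms)
  have "y \<in> G" unfolding G_def using assms(3) by auto
  then obtain x where "x extreme_point_of G"
    using extreme_point_exists_convex[OF face_of_imp_compact[OF assms(1,2) G] face_of_imp_convex[OF G]]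
    by blast
  then have "x extreme_point_of K" "x \<in> G" using extreme_point_of_face[OF G] by blast+
  then show ?thesis unfolding G_def using that by blast
qed

lemma interior_max_tensor_cone_iff:
  fixes C :: "(real^'n) set" and z :: "real^(('k::finite \<Rightarrow> 'n) \<times> 'n)"
  assumes "closed C" "convex C" "cone C" "C \<noteq> {}"
  shows "z \<in> interior (max_tensor_cone C) \<longleftrightarrow>
    (\<forall>fs g. (\<forall>i. fs i \<in> dual_cone C - {0}) \<longrightarrow> g \<in> C - {0} \<longrightarrow> 0 < prod_functional fs g z)"
proof -
  have "max_tensor_cone C = (tensor_cone (dual_cone C) C :: (real^(('k \<Rightarrow> 'n) \<times> 'n)) set)"
    unfolding max_tensor_cone_def tensor_cone_def dual_dual_cone[OF assms] ..
  then show ?thesis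
    using interior_tensor_cone_iff[OF closed_dual_cone cone_dual_cone assms(1,3)] by simp
qed

lemma prod_functional_omega:
  "prod_functional fs g (omega K xF \<psi>)
     = (\<Sum>F\<in>{F. F facet_of K}. (\<Prod>i\<in>UNIV. fs i \<bullet> xF F) * (g \<bullet> \<psi> F))"
  unfolding omega_def tensor_power_dual_eq_prod_tensor linear_sum[OF linear_prod_functional]
  by (simp add: prod_functional_prod_tensor)

locale polyhedral_section =
  fixes C :: "(real^'n) set" and \<phi> :: "real^'n" and xF \<psi> :: "(real^'n) set \<Rightarrow> real^'n"
  assumes polyhedral: "polyhedral_cone C" and proper: "proper_cone C"
    and phi_interior: "\<phi> \<in> interior (dual_cone C)"
    and facet_functional: "\<forall>F. F facet_of Kphi C \<phi> \<longrightarrow>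
           \<psi> F \<in> dual_cone C \<and> F = Kphi C \<phi> \<inter> {x. \<psi> F \<bullet> x = 0}"
    and facet_point: "\<forall>F. F facet_of Kphi C \<phi> \<longrightarrow> xF F \<in> rel_interior F"
begin

abbreviation K where "K \<equiv> Kphi C \<phi>"

lemma closed_C: "closed C" and convex_C: "convex C" and cone_C: "cone C" and C_nonempty: "C \<noteq> {}"
  using proper unfolding proper_cone_def by auto

lemma phi_pos:
  assumes "c \<in> C - {0}"
  shows "0 < \<phi> \<bullet> c"
proof -
  obtain e where e: "e > 0" "\<And>c. c \<in> C \<Longrightarrow> e * norm c \<le> \<phi> \<bullet> c"
    using mem_interior_dual_cone_bound[OF phi_interior] by blast
  have "0 < e * norm c" using e(1) assms by simp
  also have "\<dots> \<le> \<phi> \<bullet> c" using e(2) assms by blast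
  finally show ?thesis .
qed

lemma K_subset_C: "K \<subseteq> C"
  unfolding Kphi_def by blast

lemma normalized_mem_K: "c \<in> C - {0} \<Longrightarrow> (1 / (\<phi> \<bullet> c)) *\<^sub>R c \<in> K"
  using phi_pos[of c] cone_C unfolding Kphi_def cone_def by auto

lemma convex_K: "convex K"
  unfolding Kphi_def by (intro convex_Int convex_C convex_hyperplane)

lemma compact_K: "compact K"
proof -
  obtain e where e: "e > 0" "\<And>c. c \<in> C \<Longrightarrow> e * norm c \<le> \<phi> \<bullet> c"
    using mem_interior_dual_cone_bound[OF phi_interior] by blast
  have "e * norm x \<le> 1" if "x \<in> K" for x
    using e(2)[of x] that unfolding Kphi_def by simp
  then have "K \<subseteq> cball 0 (1 / e)"
    using e(1) by (auto simp: field_simps)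
  moreover have "closed K"
    unfolding Kphi_def by (intro closed_Int closed_C closed_hyperplane)
  ultimately show ?thesis
    by (meson bounded_cball bounded_subset compact_eq_bounded_closed)
qed

lemma finite_facets_K: "finite {F. F facet_of K}"
proof -
  have "polyhedron K"
    using polyhedral unfolding Kphi_def polyhedral_cone_def
    by (intro polyhedron_Int polyhedron_hyperplane) auto
  then have "finite {F. F face_of K}" by (rule finite_polyhedron_faces)
  then show ?thesis by (rule rev_finite_subset) (auto simp: facet_of_def)
qed

lemma K_not_in_hyperplane:
  assumes "f \<noteq> 0"
  shows "\<exists>y\<in>K. f \<bullet> y \<noteq> 0"
proof (rule ccontr)
  assume "\<not> ?thesis"
  then have "f \<bullet> c = 0" if "c \<in> C" for c
    using that normalized_mem_K[of c] phi_pos[of c] by (cases "c = 0") auto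
  then show False
    using proper assms unfolding proper_cone_def by blast
qed

lemma
  assumes "F facet_of K"
  shows facet_functional_dual: "\<psi> F \<in> dual_cone C"
    and facet_eq_zero_set: "F = K \<inter> {x. \<psi> F \<bullet> x = 0}"
    and facet_functional_nonzero: "\<psi> F \<noteq> 0"
    and facet_point_rel_interior: "xF F \<in> rel_interior F"
    and facet_point_mem_C: "xF F \<in> C"
proof -
  show "\<psi> F \<in> dual_cone C" "F = K \<inter> {x. \<psi> F \<bullet> x = 0}" "xF F \<in> rel_interior F"
    using assms facet_functional facet_point by blast+
  then show "\<psi> F \<noteq> 0" using assms by (auto simp: facet_of_def)
  show "xF F \<in> C"
    using \<open>xF F \<in> rel_interior F\<close> rel_interior_subset assms K_subset_C
    by (metis facet_of_def face_of_imp_subset subsetD)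
qed

lemma card_facets_killed_le_1:
  assumes "f \<in> dual_cone C - {0}"
  shows "card {F. F facet_of K \<and> f \<bullet> xF F = 0} \<le> 1"
proof -
  have "F = K \<inter> {y. f \<bullet> y = 0}" if "F facet_of K" "f \<bullet> xF F = 0" for F
    using assms K_subset_C K_not_in_hyperplane[of f] that facet_point_rel_interior
    by (intro facet_eq_supporting_face[OF convex_K]) (auto simp: dual_cone_def)
  moreover have "finite {F. F facet_of K \<and> f \<bullet> xF F = 0}"
    using finite_facets_K by (rule rev_finite_subset) auto
  ultimately show ?thesis by (auto simp: card_le_Suc0_iff_eq)
qed

lemma omega_pairing_vanishes_at_vertex:
  assumes x: "x extreme_point_of K" and card: "card (Av K x) \<le> CARD('k)"
  obtains fs :: "'k::finite \<Rightarrow> real^'n"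
  where "\<forall>i. fs i \<in> dual_cone C - {0}" "prod_functional fs x (omega K xF \<psi>) = 0"
proof -
  have "finite (Av K x)"
    using finite_facets_K unfolding Av_def by (rule rev_finite_subset) auto
  then obtain h :: "(real^'n) set \<Rightarrow> 'k" where h: "inj_on h (Av K x)"
    using card card_le_inj[of "Av K x" "UNIV::'k set"] by auto
  define fs where "fs i = (if i \<in> h ` Av K x then \<psi> (inv_into (Av K x) h i) else \<phi>)" for i
  have "x \<in> K" using x extreme_point_of_def by blast
  then have "\<phi> \<noteq> 0" unfolding Kphi_def by auto
  then have "\<phi> \<in> dual_cone C - {0}" using phi_interior interior_subset by blast
  then have fs: "fs i \<in> dual_cone C - {0}" for i
  proof (cases "i \<in> h ` Av K x")
    case True
    then have "inv_into (Av K x) h i facet_of K"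
      using inv_into_into[of i h "Av K x"] unfolding Av_def by blast
    then show ?thesis
      using True by (simp add: fs_def facet_functional_dual facet_functional_nonzero)
  qed (simp add: fs_def)
  have "(\<Prod>i\<in>UNIV. fs i \<bullet> xF F) * (x \<bullet> \<psi> F) = 0" if F: "F facet_of K" for F
  proof (cases "x \<in> F")
    case True
    then show ?thesis using facet_eq_zero_set[OF F] by (auto simp: inner_commute)
  next
    case False
    then have "fs (h F) = \<psi> F" using F h unfolding fs_def Av_def by simp
    moreover have "\<psi> F \<bullet> xF F = 0"
      using facet_eq_zero_set[OF F] facet_point_rel_interior[OF F] rel_interior_subset by blast
    ultimately have "fs (h F) \<bullet> xF F = 0" by simp
    then have "(\<Prod>i\<in>UNIV. fs i \<bullet> xF F) = 0" by (intro prod_zero) auto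
    then show ?thesis by simp
  qed
  then have "prod_functional fs x (omega K xF \<psi>) = 0"
    unfolding prod_functional_omega by (intro sum.neutral) auto
  with fs show ?thesis using that by blast
qed

lemma card_killed_facets_le:
  fixes fs :: "'k::finite \<Rightarrow> real^'n"
  assumes "\<forall>i. fs i \<in> dual_cone C - {0}"
  shows "card (\<Union>i. {F. F facet_of K \<and> fs i \<bullet> xF F = 0}) \<le> CARD('k)"
proof -
  have "card (\<Union>i. {F. F facet_of K \<and> fs i \<bullet> xF F = 0})
          \<le> (\<Sum>i\<in>UNIV. card {F. F facet_of K \<and> fs i \<bullet> xF F = 0})"
    by (rule card_UN_le) simp
  also have "\<dots> \<le> (\<Sum>i\<in>(UNIV::'k set). 1)"
    using assms card_facets_killed_le_1 by (intro sum_mono) blast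
  finally show ?thesis by simp
qed

lemma omega_pairing_pos:
  fixes fs :: "'k::finite \<Rightarrow> real^'n"
  assumes many: "\<forall>x. x extreme_point_of K \<longrightarrow> CARD('k) < card (Av K x)"
    and fs: "\<forall>i. fs i \<in> dual_cone C - {0}" and g: "g \<in> C - {0}"
  shows "0 < prod_functional fs g (omega K xF \<psi>)"
proof -
  define y where "y = (1 / (\<phi> \<bullet> g)) *\<^sub>R g"
  have y: "y \<in> K" unfolding y_def using normalized_mem_K[OF g] .
  obtain x where x: "x extreme_point_of K" and through: "\<And>F. F facet_of K \<Longrightarrow> y \<in> F \<Longrightarrow> x \<in> F"
    using extreme_point_in_facets_through[OF convex_K compact_K y] by blast
  define Killed where "Killed = (\<Union>i. {F. F facet_of K \<and> fs i \<bullet> xF F = 0})"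
  have "finite Killed"
    using finite_facets_K unfolding Killed_def by (rule rev_finite_subset) auto
  have "\<not> Av K x \<subseteq> Killed"
  proof
    assume "Av K x \<subseteq> Killed"
    with \<open>finite Killed\<close> have "card (Av K x) \<le> card Killed" by (rule card_mono)
    moreover have "CARD('k) < card (Av K x)" using many x by blast
    ultimately show False using card_killed_facets_le[OF fs] unfolding Killed_def by linarith
  qed
  then obtain F where F: "F facet_of K" "x \<notin> F" "F \<notin> Killed"
    unfolding Av_def by blast
  have nonneg: "0 \<le> fs i \<bullet> xF G" "0 \<le> g \<bullet> \<psi> G" if "G facet_of K" for G i
  proof -
    show "0 \<le> fs i \<bullet> xF G"
      using fs facet_point_mem_C[OF that] unfolding dual_cone_def by blast
    have "0 \<le> \<psi> G \<bullet> g"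
      using g facet_functional_dual[OF that] unfolding dual_cone_def by blast
    then show "0 \<le> g \<bullet> \<psi> G" by (simp only: inner_commute)
  qed
  have "fs i \<bullet> xF F \<noteq> 0" for i
    using F(1,3) unfolding Killed_def by blast
  then have "0 < fs i \<bullet> xF F" for i
    using nonneg(1)[OF F(1), of i] by (simp add: order_le_neq_trans)
  then have "0 < (\<Prod>i\<in>UNIV. fs i \<bullet> xF F)" by (simp add: prod_pos)
  moreover have "g \<bullet> \<psi> F \<noteq> 0"
  proof
    assume "g \<bullet> \<psi> F = 0"
    then have "\<psi> F \<bullet> y = 0" by (simp add: y_def inner_commute[of "\<psi> F" g])
    then have "y \<in> F" using y facet_eq_zero_set[OF F(1)] by blast
    then show False using through F by blast
  qed
  then have "0 < g \<bullet> \<psi> F" using nonneg(2)[OF F(1)] by simp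
  ultimately have "0 < (\<Prod>i\<in>UNIV. fs i \<bullet> xF F) * (g \<bullet> \<psi> F)" by simp
  moreover have "0 \<le> (\<Prod>i\<in>UNIV. fs i \<bullet> xF G) * (g \<bullet> \<psi> G)" if "G facet_of K" for G
    using nonneg[OF that] by (simp add: prod_nonneg)
  ultimately show ?thesis
    unfolding prod_functional_omega using F(1)
    by (intro sum_pos2[OF finite_facets_K, of F]) simp_all
qed

lemma omega_pairing_pos_iff:
  "(\<forall>fs g. (\<forall>i. fs i \<in> dual_cone C - {0}) \<longrightarrow> g \<in> C - {0}
      \<longrightarrow> 0 < prod_functional fs g (omega K xF \<psi> :: real^(('k::finite \<Rightarrow> 'n) \<times> 'n)))
   \<longleftrightarrow> (\<forall>x. x extreme_point_of K \<longrightarrow> CARD('k) < card (Av K x))"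
proof (intro iffI allI impI)
  fix x assume pos: "\<forall>fs g. (\<forall>i. fs i \<in> dual_cone C - {0}) \<longrightarrow> g \<in> C - {0}
      \<longrightarrow> 0 < prod_functional fs g (omega K xF \<psi> :: real^(('k \<Rightarrow> 'n) \<times> 'n))"
    and x: "x extreme_point_of K"
  have x_C: "x \<in> C - {0}"
    using x K_subset_C unfolding extreme_point_of_def Kphi_def by auto
  show "CARD('k) < card (Av K x)"
  proof (rule ccontr)
    assume "\<not> CARD('k) < card (Av K x)"
    then have "card (Av K x) \<le> CARD('k)" by simp
    then obtain fs :: "'k \<Rightarrow> real^'n"
      where fs: "\<forall>i. fs i \<in> dual_cone C - {0}" and "prod_functional fs x (omega K xF \<psi>) = 0"
      using omega_pairing_vanishes_at_vertex[OF x] by blast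
    moreover have "0 < prod_functional fs x (omega K xF \<psi>)"
      using pos fs x_C by blast
    ultimately show False by simp
  qed
next
  fix fs :: "'k \<Rightarrow> real^'n" and g
  assume "\<forall>x. x extreme_point_of K \<longrightarrow> CARD('k) < card (Av K x)"
    and "\<forall>i. fs i \<in> dual_cone C - {0}" "g \<in> C - {0}"
  then show "0 < prod_functional fs g (omega K xF \<psi>)" by (rule omega_pairing_pos)
qed

end

theorem proposition3:
  fixes C :: "(real^'n) set" and \<phi> :: "real^'n"
    and xF \<psi> :: "(real^'n) set \<Rightarrow> real^'n"
  assumes "polyhedral_cone C" and "proper_cone C"
    and "\<phi> \<in> interior (dual_cone C)"
    and "\<forall>F. F facet_of Kphi C \<phi> \<longrightarrow>
           \<psi> F \<in> dual_cone C \<and> F = Kphi C \<phi> \<inter> {x. \<psi> F \<bullet> x = 0}"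
    and "\<forall>F. F facet_of Kphi C \<phi> \<longrightarrow> xF F \<in> rel_interior F"
  shows "(omega (Kphi C \<phi>) xF \<psi> :: real^(('k::finite \<Rightarrow> 'n) \<times> 'n))
            \<in> interior (max_tensor_cone C)
         \<longleftrightarrow> (\<forall>x. x extreme_point_of Kphi C \<phi> \<longrightarrow> card (Av (Kphi C \<phi>) x) > CARD('k))"
proof -
  interpret polyhedral_section C \<phi> xF \<psi>
    using assms by unfold_locales
  show ?thesis
    unfolding interior_max_tensor_cone_iff[OF closed_C convex_C cone_C C_nonempty]
    by (rule omega_pairing_pos_iff)
qed

end
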